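(* Let $\mathcal{S}$ be a finite elation generalized quadrangle of order $(s,t)$ with elation group $G$ and associated $4$-gonal family $(G,\{A_i\}_{i=0}^t,\{A_i^*\}_{i=0}^t)$. If $s$ does not divide $t$, then $A_i^*G'=A_iG'$ for each $i\in\{0,\dots,t\}$.
   Context: A generalized quadrangle of order $(s,t)$: each line has $s+1$ points, each point is on $t+1$ lines, and for each non-incident point-line pair $(P,\ell)$ there is a unique point on $\ell$ collinear with $P$. An elation about $P$ is an automorphism that is the identity or fixes each line through $P$ and no point not collinear with $P$. $\mathcal{S}$ is an elation generalized quadrangle with base point $P$ and elation group $G$ if $G$ consists of elations about $P$ and acts regularly on the points not collinear with $P$. The associated $4$-gonal family: fix a point $y$ not collinear with $P$, let $M_0,\dots,M_t$ be the lines through $y$, let $z_i$ be the unique point of $M_i$ collinear with $P$, and let $A_i$, $A_i^*$ be the stabilizers in $G$ of $M_i$ and $z_i$ respectively. $G'$ is the derived subgroup of $G$. *)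

theory Defs
  imports "HOL-Algebra.Algebra"
begin

text \<open>A (finite) incidence structure is given by a point set P and a set L of lines,
  each line being represented by the set of points incident with it.\<close>

definition collinear :: "'p set set \<Rightarrow> 'p \<Rightarrow> 'p \<Rightarrow> bool" where
  "collinear L x y \<longleftrightarrow> (\<exists>l\<in>L. x \<in> l \<and> y \<in> l)"

definition is_GQ :: "'p set \<Rightarrow> 'p set set \<Rightarrow> nat \<Rightarrow> nat \<Rightarrow> bool" where
  "is_GQ P L s t \<longleftrightarrow>
     finite P \<and> s \<ge> 1 \<and> t \<ge> 1 \<and>
     (\<forall>l\<in>L. l \<subseteq> P \<and> card l = s + 1) \<and>
     (\<forall>x\<in>P. card {l\<in>L. x \<in> l} = t + 1) \<and>
     (\<forall>x\<in>P. \<forall>y\<in>P. x \<noteq> y \<longrightarrow> card {l\<in>L. x \<in> l \<and> y \<in> l} \<le> 1) \<and>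
     (\<forall>x\<in>P. \<forall>l\<in>L. x \<notin> l \<longrightarrow> (\<exists>!z. z \<in> l \<and> collinear L x z))"

definition GQ_aut :: "'p set \<Rightarrow> 'p set set \<Rightarrow> ('p \<Rightarrow> 'p) \<Rightarrow> bool" where
  "GQ_aut P L g \<longleftrightarrow> g \<in> Bij P \<and> (\<lambda>l. g ` l) ` L = L"

definition elation :: "'p set \<Rightarrow> 'p set set \<Rightarrow> 'p \<Rightarrow> ('p \<Rightarrow> 'p) \<Rightarrow> bool" where
  "elation P L p g \<longleftrightarrow> GQ_aut P L g \<and>
     (g = (\<lambda>x\<in>P. x) \<or>
      ((\<forall>l\<in>L. p \<in> l \<longrightarrow> g ` l = l) \<and>
       (\<forall>x\<in>P. \<not> collinear L p x \<longrightarrow> g x \<noteq> x)))"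

definition is_EGQ :: "'p set \<Rightarrow> 'p set set \<Rightarrow> nat \<Rightarrow> nat \<Rightarrow> 'p \<Rightarrow> ('p \<Rightarrow> 'p) set \<Rightarrow> bool" where
  "is_EGQ P L s t p G \<longleftrightarrow>
     is_GQ P L s t \<and> p \<in> P \<and>
     subgroup G (BijGroup P) \<and>
     (\<forall>g\<in>G. elation P L p g) \<and>
     (\<forall>x\<in>P. \<forall>y\<in>P. \<not> collinear L p x \<longrightarrow> \<not> collinear L p y \<longrightarrow> (\<exists>!g. g \<in> G \<and> g x = y))"

end

theory Submission
  imports Defs
begin

text \<open>Let \<open>y\<close> be opposite \<open>p\<close>, \<open>M\<close> a line on \<open>y\<close> and \<open>z\<close> its point collinear with \<open>p\<close>.
  The elation group is the disjoint union of the stabilizer \<open>A\<^sup>*\<close> of \<open>z\<close> and the sets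
  \<open>A\<^sub>M A\<^sub>N - A\<^sub>M\<close>, \<open>N\<close> running over the other \<open>t\<close> lines on \<open>y\<close>; intersecting with a subgroup
  \<open>K \<supseteq> A\<^sub>M\<close> gives \<open>|K| + t s = |K \<inter> A\<^sup>*| + s \<Sum>\<^sub>N |K \<inter> A\<^sub>N|\<close>.
  If \<open>A\<^sup>* G' \<noteq> A\<^sub>M G'\<close>, take \<open>H \<supseteq> A\<^sub>M G'\<close> maximal among the subgroups not containing
  \<open>A\<^sup>*\<close> and put \<open>H' = A\<^sup>* H\<close>. Subgroups containing \<open>G'\<close> are normal, so for every subgroup
  \<open>Q\<close> not contained in \<open>H\<close> maximality gives \<open>Q H \<supseteq> H'\<close>, whence
  \<open>|Q \<inter> H'| |H| = |Q \<inter> H| |H'|\<close> by Dedekind's modular law. Comparing the counting identities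
  for \<open>H\<close> and \<open>H'\<close> then yields \<open>t = s \<cdot> |{N. A\<^sub>N \<subseteq> H}|\<close>, contradicting \<open>\<not> s dvd t\<close>.\<close>

section \<open>Counting in finite groups\<close>

lemma card_eq_of_weighted_counts:
  fixes h h' a a' s t :: int and c c' :: "'i \<Rightarrow> int"
  assumes "h < h'" "0 < s" "finite I"
    and count: "h + t * s = a + s * sum c I" "h' + t * s = a' + s * sum c' I"
    and proportional: "a' * h = a * h'"
    and summand: "\<And>i. i \<in> I \<Longrightarrow> h' * c i - h * c' i = (if i \<in> S then (h' - h) * s else 0)"
  shows "t = s * card (I \<inter> S)"
proof -
  have sum_eq: "(\<Sum>i\<in>I. h' * c i - h * c' i) = (h' - h) * s * card (I \<inter> S)"
    using assms(3) summand by (simp add: sum.If_cases)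
  have "s * (\<Sum>i\<in>I. h' * c i - h * c' i) = h' * (s * sum c I) - h * (s * sum c' I)"
    by (simp add: sum_subtractf sum_distrib_left algebra_simps)
  also have "\<dots> = h' * (h + t * s - a) - h * (h' + t * s - a')"
    using count by (simp add: eq_diff_eq')
  also have "\<dots> = t * s * (h' - h) + (a' * h - a * h')"
    by (simp add: algebra_simps)
  finally have "(s * (h' - h)) * (s * card (I \<inter> S)) = (s * (h' - h)) * t"
    unfolding sum_eq proportional by (simp add: algebra_simps)
  then show ?thesis using assms(1,2) by simp
qed

lemma dvd_of_proportional_counts:
  fixes H H' A :: "'a set" and B :: "'i \<Rightarrow> 'a set"
  assumes "finite H'" "H \<subset> H'" "finite I" "0 < s"
    and card_B: "\<And>i. i \<in> I \<Longrightarrow> card (B i) = s"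
    and count: "\<And>K. K \<in> {H, H'} \<Longrightarrow>
      card K + card I * s = card (A \<inter> K) + s * (\<Sum>i\<in>I. card (B i \<inter> K))"
    and prop_A: "card (A \<inter> H') * card H = card (A \<inter> H) * card H'"
    and prop_B: "\<And>i. i \<in> I \<Longrightarrow> \<not> B i \<subseteq> H \<Longrightarrow>
      card (B i \<inter> H') * card H = card (B i \<inter> H) * card H'"
  shows "s dvd card I"
proof -
  have "int (card I) = int s * card (I \<inter> {i. B i \<subseteq> H})"
  proof (rule card_eq_of_weighted_counts
      [where c = "\<lambda>i. card (B i \<inter> H)" and c' = "\<lambda>i. card (B i \<inter> H')"])
    show "int (card H) < int (card H')" using assms(1,2) by (simp add: psubset_card_mono)
    show "int (card H) + int (card I) * int s =
        int (card (A \<inter> H)) + int s * (\<Sum>i\<in>I. int (card (B i \<inter> H)))"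
      "int (card H') + int (card I) * int s =
        int (card (A \<inter> H')) + int s * (\<Sum>i\<in>I. int (card (B i \<inter> H')))"
      using count[of H] count[of H'] by (simp_all flip: of_nat_mult of_nat_add of_nat_sum)
    show "int (card (A \<inter> H')) * int (card H) = int (card (A \<inter> H)) * int (card H')"
      using prop_A by (simp flip: of_nat_mult)
    fix i assume i: "i \<in> I"
    show "int (card H') * int (card (B i \<inter> H)) - int (card H) * int (card (B i \<inter> H')) =
      (if i \<in> {i. B i \<subseteq> H} then (int (card H') - int (card H)) * int s else 0)"
    proof (cases "B i \<subseteq> H")
      case True
      then have "B i \<inter> H = B i" "B i \<inter> H' = B i" using assms(2) by auto
      then show ?thesis using True card_B[OF i] by (simp add: algebra_simps)
    next
      case False
      then show ?thesis using prop_B[OF i] by (simp add: mult.commute flip: of_nat_mult)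
    qed
  qed (use assms(3,4) in simp_all)
  then show ?thesis by (metis dvd_triv_left of_nat_eq_iff of_nat_mult)
qed

context group
begin

lemma card_set_mult_fiber:
  assumes U: "subgroup U G" and H: "subgroup H G" and u0: "u0 \<in> U" and h0: "h0 \<in> H"
  shows "card {(u, h) \<in> U \<times> H. u \<otimes> h = u0 \<otimes> h0} = card (U \<inter> H)"
proof -
  interpret U: subgroup U G by (fact U)
  interpret H: subgroup H G by (fact H)
  have [simp]: "u0 \<in> carrier G" "h0 \<in> carrier G" using u0 h0 by auto
  let ?F = "{(u, h) \<in> U \<times> H. u \<otimes> h = u0 \<otimes> h0}"
  have "bij_betw (\<lambda>v. (u0 \<otimes> v, inv v \<otimes> h0)) (U \<inter> H) ?F"
  proof (rule bij_betw_byWitness[where f' = "\<lambda>(u, h). inv u0 \<otimes> u"])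
    show "\<forall>v\<in>U \<inter> H. (\<lambda>(u, h). inv u0 \<otimes> u) (u0 \<otimes> v, inv v \<otimes> h0) = v"
      by (auto simp: m_assoc[symmetric])
    have "(u0 \<otimes> (inv u0 \<otimes> u), inv (inv u0 \<otimes> u) \<otimes> h0) = (u, h)"
      if "u \<in> U" "h \<in> H" "u \<otimes> h = u0 \<otimes> h0" for u h
    proof -
      have [simp]: "u \<in> carrier G" "h \<in> carrier G" using that by auto
      have "inv (inv u0 \<otimes> u) \<otimes> h0 = inv u \<otimes> (u0 \<otimes> h0)"
        by (simp add: inv_mult_group m_assoc)
      also have "\<dots> = h" by (simp flip: that(3) add: m_assoc[symmetric])
      finally show ?thesis by (simp add: m_assoc[symmetric])
    qed
    then show "\<forall>w\<in>?F. (\<lambda>v. (u0 \<otimes> v, inv v \<otimes> h0)) ((\<lambda>(u, h). inv u0 \<otimes> u) w) = w"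
      by auto
    show "(\<lambda>v. (u0 \<otimes> v, inv v \<otimes> h0)) ` (U \<inter> H) \<subseteq> ?F"
      using u0 h0 by (auto simp: m_assoc[symmetric] U.mem_carrier) (simp add: m_assoc U.mem_carrier)
    have "inv u0 \<otimes> u = h0 \<otimes> inv h" if "u \<in> U" "h \<in> H" "u \<otimes> h = u0 \<otimes> h0" for u h
    proof -
      have [simp]: "u \<in> carrier G" "h \<in> carrier G" using that by auto
      have "inv u0 \<otimes> u = inv u0 \<otimes> (u \<otimes> h) \<otimes> inv h" by (simp add: m_assoc)
      then show ?thesis by (simp add: that(3) m_assoc[symmetric])
    qed
    then show "(\<lambda>(u, h). inv u0 \<otimes> u) ` ?F \<subseteq> U \<inter> H"
      using u0 h0 by (fastforce simp del: inv_solve_left' intro: U.m_closed H.m_closed)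
  qed
  then show ?thesis by (simp add: bij_betw_same_card)
qed

lemma card_set_mult_subgroups:
  assumes U: "subgroup U G" and H: "subgroup H G" and "finite U" "finite H"
  shows "card U * card H = card (U \<inter> H) * card (U <#> H)"
proof -
  have "(\<Sum>x\<in>U \<times> H. card {k \<in> U <#> H. fst x \<otimes> snd x = k}) = card (U \<inter> H) * card (U <#> H)"
  proof (rule sum_multicount)
    show "finite (U <#> H)"
      using assms unfolding set_mult_def by auto
    show "\<forall>k\<in>U <#> H. card {x \<in> U \<times> H. fst x \<otimes> snd x = k} = card (U \<inter> H)"
    proof
      fix k assume "k \<in> U <#> H"
      then obtain u0 h0 where "u0 \<in> U" "h0 \<in> H" "k = u0 \<otimes> h0"
        unfolding set_mult_def by blast
      then show "card {x \<in> U \<times> H. fst x \<otimes> snd x = k} = card (U \<inter> H)"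
        using card_set_mult_fiber[OF U H] by (simp add: case_prod_beta' mem_Times_iff)
    qed
  qed (use assms in simp)
  moreover have "{k \<in> U <#> H. fst x \<otimes> snd x = k} = {fst x \<otimes> snd x}" if "x \<in> U \<times> H" for x
    using that unfolding set_mult_def by (auto simp: mem_Times_iff)
  ultimately show ?thesis by (simp add: card_cartesian_product)
qed

lemma set_mult_subset_subgroup:
  assumes "subgroup K G" "S \<subseteq> K" "T \<subseteq> K"
  shows "S <#> T \<subseteq> K"
  using mono_set_mult[OF assms(2,3)] subgroup_mult_id[OF assms(1)] by blast

lemma subset_set_mult_left:
  assumes "subgroup H G" "Q \<subseteq> carrier G"
  shows "Q \<subseteq> Q <#> H"
proof
  fix q assume "q \<in> Q"
  then have "q = q \<otimes> \<one>" using assms(2) by auto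
  then show "q \<in> Q <#> H" using \<open>q \<in> Q\<close> subgroup.one_closed[OF assms(1)]
    unfolding set_mult_def by blast
qed

lemma subset_set_mult_right:
  assumes "subgroup Q G" "H \<subseteq> carrier G"
  shows "H \<subseteq> Q <#> H"
proof
  fix h assume "h \<in> H"
  then have "h = \<one> \<otimes> h" using assms(2) by auto
  then show "h \<in> Q <#> H" using \<open>h \<in> H\<close> subgroup.one_closed[OF assms(1)]
    unfolding set_mult_def by blast
qed

text \<open>A counting form of the Dedekind modular law \<open>(Q \<inter> K) H = K\<close>.\<close>

lemma card_Int_proportional:
  assumes Q: "subgroup Q G" and H: "subgroup H G" and K: "subgroup K G"
    and HK: "H \<subseteq> K" and KQH: "K \<subseteq> Q <#> H" and "finite K"
  shows "card (Q \<inter> K) * card H = card (Q \<inter> H) * card K"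
proof -
  have "(Q \<inter> K) <#> H = K"
  proof
    show "(Q \<inter> K) <#> H \<subseteq> K" using set_mult_subset_subgroup[OF K] HK by blast
    show "K \<subseteq> (Q \<inter> K) <#> H"
    proof
      fix k assume k: "k \<in> K"
      then obtain x h where xh: "x \<in> Q" "h \<in> H" "k = x \<otimes> h"
        using KQH unfolding set_mult_def by blast
      have [simp]: "x \<in> carrier G" "h \<in> carrier G"
        using xh(1,2) subgroup.mem_carrier[OF Q] subgroup.mem_carrier[OF H] by auto
      have "x = k \<otimes> inv h" using xh(3) by (simp add: m_assoc)
      also have "\<dots> \<in> K"
        using k xh(2) HK by (simp add: subgroup.m_closed[OF K] subgroup.m_inv_closed[OF K] subset_iff)
      finally show "k \<in> (Q \<inter> K) <#> H" using xh unfolding set_mult_def by blast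
    qed
  qed
  moreover have "Q \<inter> K \<inter> H = Q \<inter> H" using HK by blast
  ultimately show ?thesis
    using card_set_mult_subgroups[OF subgroups_Inter_pair[OF Q K] H] assms(6) HK
    by (metis finite_Int finite_subset)
qed

lemma normal_if_derived_subset:
  assumes H: "subgroup H G" and D: "derived G (carrier G) \<subseteq> H"
  shows "H \<lhd> G"
proof (rule normal_invI[OF H])
  fix x h assume x: "x \<in> carrier G" and h: "h \<in> H"
  have [simp]: "h \<in> carrier G" using subgroup.mem_carrier[OF H h] .
  have "x \<otimes> h \<otimes> inv x \<otimes> inv h \<in> H"
    using D x h subgroup.mem_carrier[OF H h] unfolding derived_def by (blast intro: generate.incl)
  then have "x \<otimes> h \<otimes> inv x \<otimes> inv h \<otimes> h \<in> H"
    using h by (simp add: subgroup.m_closed[OF H])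
  then show "x \<otimes> h \<otimes> inv x \<in> H" using x by (simp add: m_assoc)
qed

lemma subgroup_set_mult_if_derived_subset:
  assumes Q: "subgroup Q G" and H: "subgroup H G" and D: "derived G (carrier G) \<subseteq> H"
  shows "subgroup (Q <#> H) G"
  using mult_norm_subgroup[OF normal_if_derived_subset[OF H D] Q]
    commut_normal[OF Q normal_if_derived_subset[OF H D]] by simp

lemma obtain_maximal_subgroup:
  assumes "finite (carrier G)" "subgroup N G" "\<not> A \<subseteq> N"
  obtains H where "subgroup H G" "N \<subseteq> H" "\<not> A \<subseteq> H"
    "\<And>K. subgroup K G \<Longrightarrow> H \<subseteq> K \<Longrightarrow> \<not> A \<subseteq> K \<Longrightarrow> K = H"
proof -
  define F where "F = {H. subgroup H G \<and> N \<subseteq> H \<and> \<not> A \<subseteq> H}"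
  have "finite F"
    using finite_subset[of F "Pow (carrier G)"] assms(1) subgroup.subset unfolding F_def by blast
  moreover have "N \<in> F" using assms(2,3) unfolding F_def by blast
  ultimately obtain H where H: "H \<in> F" and H_max: "\<forall>K\<in>F. H \<subseteq> K \<longrightarrow> H = K"
    using finite_has_maximal2 by blast
  show thesis
  proof (rule that)
    show "subgroup H G" "N \<subseteq> H" "\<not> A \<subseteq> H" using H unfolding F_def by auto
    show "K = H" if "subgroup K G" "H \<subseteq> K" "\<not> A \<subseteq> K" for K
    proof -
      have "K \<in> F" using that H unfolding F_def by blast
      then show ?thesis using H_max that(2) by blast
    qed
  qed
qed

lemma card_Int_proportional_if_maximal:
  assumes fin: "finite (carrier G)" and A: "subgroup A G" and H: "subgroup H G"
    and D: "derived G (carrier G) \<subseteq> H"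
    and max: "\<And>K. subgroup K G \<Longrightarrow> H \<subseteq> K \<Longrightarrow> \<not> A \<subseteq> K \<Longrightarrow> K = H"
    and Q: "subgroup Q G" "\<not> Q \<subseteq> H"
  shows "card (Q \<inter> (A <#> H)) * card H = card (Q \<inter> H) * card (A <#> H)"
proof (rule card_Int_proportional[OF Q(1) H subgroup_set_mult_if_derived_subset[OF A H D]])
  have QH: "subgroup (Q <#> H) G" "H \<subseteq> Q <#> H" "Q \<subseteq> Q <#> H"
    using subgroup_set_mult_if_derived_subset[OF Q(1) H D]
      subset_set_mult_right[OF Q(1) subgroup.subset[OF H]]
      subset_set_mult_left[OF H subgroup.subset[OF Q(1)]] by auto
  have "A \<subseteq> Q <#> H" using max[OF QH(1,2)] QH(3) Q(2) by blast
  then show "A <#> H \<subseteq> Q <#> H" using set_mult_subset_subgroup[OF QH(1)] QH(2) by blast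
  show "H \<subseteq> A <#> H" using subset_set_mult_right[OF A subgroup.subset[OF H]] .
  show "finite (A <#> H)"
    using finite_subset[OF setmult_subset_G[OF subgroup.subset[OF A] subgroup.subset[OF H]] fin] .
qed

end

text \<open>In the application \<open>A\<close> is \<open>A\<^sup>*\<close>, \<open>A0\<close> is \<open>A\<^sub>M\<close> and \<open>B\<close> maps each other line
  \<open>N \<in> I\<close> on \<open>y\<close> to \<open>A\<^sub>N\<close>.\<close>

locale product_partition = group +
  fixes A A0 :: "'a set" and B :: "'i \<Rightarrow> 'a set" and I :: "'i set"
  assumes finite_carrier: "finite (carrier G)"
    and subgroup_A: "subgroup A G" and subgroup_A0: "subgroup A0 G" and A0_subset_A: "A0 \<subseteq> A"
    and finite_I: "finite I"
    and subgroup_B: "i \<in> I \<Longrightarrow> subgroup (B i) G"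
    and card_B: "i \<in> I \<Longrightarrow> card (B i) = card A0"
    and A_Int_B: "i \<in> I \<Longrightarrow> A \<inter> B i \<subseteq> {\<one>}"
    and covering: "carrier G \<subseteq> A \<union> (\<Union>i\<in>I. A0 <#> B i)"
    and set_mult_B_disjoint:
      "i \<in> I \<Longrightarrow> j \<in> I \<Longrightarrow> i \<noteq> j \<Longrightarrow> (A0 <#> B i) \<inter> (A0 <#> B j) \<subseteq> A0"
begin

lemma mem_set_mult_B_cases:
  assumes "i \<in> I" "k \<in> A0 <#> B i"
  obtains a b where "a \<in> A0" "b \<in> B i" "k = a \<otimes> b" "b = inv a \<otimes> k"
proof -
  obtain a b where ab: "a \<in> A0" "b \<in> B i" "k = a \<otimes> b"
    using assms(2) unfolding set_mult_def by blast
  moreover have "a \<in> carrier G" "b \<in> carrier G"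
    using ab subgroup.mem_carrier[OF subgroup_A0] subgroup.mem_carrier[OF subgroup_B[OF assms(1)]]
    by auto
  ultimately show thesis using that by (simp add: m_assoc[symmetric])
qed

lemma A_Int_set_mult_B:
  assumes i: "i \<in> I"
  shows "A \<inter> (A0 <#> B i) \<subseteq> A0"
proof
  fix k assume k: "k \<in> A \<inter> (A0 <#> B i)"
  then obtain a b where ab: "a \<in> A0" "b \<in> B i" "k = a \<otimes> b" "b = inv a \<otimes> k"
    using mem_set_mult_B_cases[OF i] by blast
  have "b \<in> A"
    using ab(1,4) k A0_subset_A subgroup.m_closed[OF subgroup_A] subgroup.m_inv_closed[OF subgroup_A]
    by auto
  then have "b = \<one>" using A_Int_B[OF i] ab(2) by blast
  then show "k \<in> A0" using ab(1,3) subgroup.mem_carrier[OF subgroup_A0] by simp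
qed

lemma card_set_mult_B_Int:
  assumes i: "i \<in> I" and K: "subgroup K G" "A0 \<subseteq> K"
  shows "card (A0 <#> (B i \<inter> K)) = card A0 * card (B i \<inter> K)"
proof -
  have sub: "subgroup (B i \<inter> K) G" using subgroups_Inter_pair[OF subgroup_B[OF i] K(1)] .
  have "A0 \<inter> (B i \<inter> K) = {\<one>}"
    using A_Int_B[OF i] A0_subset_A subgroup.one_closed[OF sub] subgroup.one_closed[OF subgroup_A0]
    by blast
  moreover have "finite A0" "finite (B i \<inter> K)"
    using finite_carrier subgroup.subset[OF subgroup_A0] subgroup.subset[OF sub]
    by (auto intro: finite_subset)
  ultimately show ?thesis using card_set_mult_subgroups[OF subgroup_A0 sub] by simp
qed

lemma subgroup_decomposition:
  assumes K: "subgroup K G" "A0 \<subseteq> K"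
  shows "K = (A \<inter> K) \<union> (\<Union>i\<in>I. (A0 <#> (B i \<inter> K)) - A0)"
proof
  show "K \<subseteq> (A \<inter> K) \<union> (\<Union>i\<in>I. (A0 <#> (B i \<inter> K)) - A0)"
  proof
    fix k assume k: "k \<in> K"
    show "k \<in> (A \<inter> K) \<union> (\<Union>i\<in>I. (A0 <#> (B i \<inter> K)) - A0)"
    proof (cases "k \<in> A")
      case False
      then obtain i where i: "i \<in> I" "k \<in> A0 <#> B i"
        using covering k subgroup.subset[OF K(1)] by blast
      then obtain a b where ab: "a \<in> A0" "b \<in> B i" "k = a \<otimes> b" "b = inv a \<otimes> k"
        by (rule mem_set_mult_B_cases)
      have "b \<in> K"
        using ab(1,4) k K(2) subgroup.m_closed[OF K(1)] subgroup.m_inv_closed[OF K(1)] by auto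
      then have "k \<in> A0 <#> (B i \<inter> K)" unfolding set_mult_def using ab(1-3) by blast
      then show ?thesis using i(1) False A0_subset_A by blast
    qed (use k in blast)
  qed
  have "A0 <#> (B i \<inter> K) \<subseteq> K" for i
    using set_mult_subset_subgroup[OF K(1) K(2)] by simp
  then show "(A \<inter> K) \<union> (\<Union>i\<in>I. (A0 <#> (B i \<inter> K)) - A0) \<subseteq> K" by blast
qed

lemma card_subgroup_count:
  assumes K: "subgroup K G" "A0 \<subseteq> K"
  shows "card K + card I * card A0 = card (A \<inter> K) + card A0 * (\<Sum>i\<in>I. card (B i \<inter> K))"
proof -
  define S where "S i = A0 <#> (B i \<inter> K)" for i
  have finite_S: "finite (S i)" for i
    using finite_subset[OF set_mult_subset_subgroup[OF K(1)] finite_subset[OF subgroup.subset[OF K(1)]]]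
      K(2) finite_carrier unfolding S_def by blast
  have S_B: "S i \<subseteq> A0 <#> B i" for i
    unfolding S_def by (rule mono_set_mult) auto
  have "card K = card (A \<inter> K) + card (\<Union>i\<in>I. S i - A0)"
  proof (subst subgroup_decomposition[OF K], unfold S_def[symmetric], rule card_Un_disjoint)
    have "A \<inter> (S i - A0) = {}" if "i \<in> I" for i
      using A_Int_set_mult_B[OF that] S_B[of i] by blast
    then show "(A \<inter> K) \<inter> (\<Union>i\<in>I. S i - A0) = {}" by blast
  qed (use finite_I finite_S finite_subset[OF subgroup.subset[OF K(1)] finite_carrier] in auto)
  also have "card (\<Union>i\<in>I. S i - A0) = (\<Sum>i\<in>I. card (S i - A0))"
  proof (rule card_UN_disjoint[OF finite_I])
    show "\<forall>i\<in>I. \<forall>j\<in>I. i \<noteq> j \<longrightarrow> (S i - A0) \<inter> (S j - A0) = {}"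
      using set_mult_B_disjoint S_B by fast
  qed (use finite_S in blast)
  finally have "card K = card (A \<inter> K) + (\<Sum>i\<in>I. card (S i - A0))" .
  moreover have "(\<Sum>i\<in>I. card (S i - A0)) + card I * card A0 = (\<Sum>i\<in>I. card (S i))"
  proof -
    have "card (S i - A0) + card A0 = card (S i)" if "i \<in> I" for i
      using subset_set_mult_left[OF subgroups_Inter_pair[OF subgroup_B[OF that] K(1)]
          subgroup.subset[OF subgroup_A0]] finite_S[of i]
      unfolding S_def by (metis card_Diff_subset card_mono le_add_diff_inverse2 rev_finite_subset)
    then have "(\<Sum>i\<in>I. card (S i)) = (\<Sum>i\<in>I. card (S i - A0) + card A0)"
      by (intro sum.cong) auto
    then show ?thesis by (simp add: sum.distrib)
  qed
  moreover have "(\<Sum>i\<in>I. card (S i)) = card A0 * (\<Sum>i\<in>I. card (B i \<inter> K))"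
    unfolding S_def sum_distrib_left using card_set_mult_B_Int[OF _ K] by (intro sum.cong) auto
  ultimately show ?thesis by linarith
qed

lemma dvd_if_not_subset:
  assumes N: "subgroup N G" "A0 \<subseteq> N" "derived G (carrier G) \<subseteq> N" and A: "\<not> A \<subseteq> N"
  shows "card A0 dvd card I"
proof -
  obtain H where H: "subgroup H G" "N \<subseteq> H" "\<not> A \<subseteq> H"
    and H_max: "\<And>K. subgroup K G \<Longrightarrow> H \<subseteq> K \<Longrightarrow> \<not> A \<subseteq> K \<Longrightarrow> K = H"
    using obtain_maximal_subgroup[OF finite_carrier N(1) A] by blast
  have D: "derived G (carrier G) \<subseteq> H" using H(2) N(3) by blast
  define H' where "H' = A <#> H"
  have H': "subgroup H' G"
    unfolding H'_def using subgroup_set_mult_if_derived_subset[OF subgroup_A H(1) D] .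
  then have "finite H'" using finite_subset[OF subgroup.subset finite_carrier] by blast
  have "H \<subseteq> H'" "A \<subseteq> H'"
    unfolding H'_def using subset_set_mult_right[OF subgroup_A subgroup.subset[OF H(1)]]
      subset_set_mult_left[OF H(1) subgroup.subset[OF subgroup_A]] by auto
  have proportional: "card (Q \<inter> H') * card H = card (Q \<inter> H) * card H'"
    if "subgroup Q G" "\<not> Q \<subseteq> H" for Q
    unfolding H'_def
    using card_Int_proportional_if_maximal[OF finite_carrier subgroup_A H(1) D H_max that] .
  show ?thesis
  proof (rule dvd_of_proportional_counts[where H = H and H' = H' and A = A and B = B])
    show "card K + card I * card A0 = card (A \<inter> K) + card A0 * (\<Sum>i\<in>I. card (B i \<inter> K))"
      if "K \<in> {H, H'}" for K
      using that card_subgroup_count H(1) H' N(2) H(2) \<open>H \<subseteq> H'\<close> by auto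
    show "0 < card A0"
      using subgroup.finite_imp_card_positive[OF subgroup_A0 finite_carrier] .
  qed (use \<open>H \<subseteq> H'\<close> \<open>A \<subseteq> H'\<close> H(3) \<open>finite H'\<close> finite_I card_B proportional subgroup_A subgroup_B
      in auto)
qed

theorem set_mult_derived_eq:
  assumes "\<not> card A0 dvd card I"
  shows "A <#> derived G (carrier G) = A0 <#> derived G (carrier G)"
proof
  let ?D = "derived G (carrier G)"
  have D: "subgroup ?D G" by (rule derived_is_subgroup) simp
  have N: "subgroup (A0 <#> ?D) G" "A0 \<subseteq> A0 <#> ?D" "?D \<subseteq> A0 <#> ?D"
    using subgroup_set_mult_if_derived_subset[OF subgroup_A0 D subset_refl]
      subset_set_mult_left[OF D subgroup.subset[OF subgroup_A0]]
      subset_set_mult_right[OF subgroup_A0 subgroup.subset[OF D]] by auto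
  then have "A \<subseteq> A0 <#> ?D" using dvd_if_not_subset assms by blast
  then show "A <#> ?D \<subseteq> A0 <#> ?D" using set_mult_subset_subgroup[OF N(1)] N(3) by blast
  show "A0 <#> ?D \<subseteq> A <#> ?D" using A0_subset_A by (rule mono_set_mult) simp
qed

end

section \<open>Stabilizers in bijection groups\<close>

lemma BijGroup_mult_apply:
  "f \<in> Bij S \<Longrightarrow> g \<in> Bij S \<Longrightarrow> x \<in> S \<Longrightarrow> (f \<otimes>\<^bsub>BijGroup S\<^esub> g) x = f (g x)"
  by (simp add: BijGroup_def compose_def)

lemma BijGroup_one_apply: "x \<in> S \<Longrightarrow> \<one>\<^bsub>BijGroup S\<^esub> x = x"
  by (simp add: BijGroup_def)

lemma BijGroup_inv_apply:
  assumes "f \<in> Bij S" "x \<in> S"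
  shows "(inv\<^bsub>BijGroup S\<^esub> f) (f x) = x" and "f ((inv\<^bsub>BijGroup S\<^esub> f) x) = x"
proof -
  have f: "bij_betw f S S" using assms(1) by (simp add: Bij_def)
  show "(inv\<^bsub>BijGroup S\<^esub> f) (f x) = x"
    using assms bij_betw_apply[OF f] bij_betw_inv_into_left[OF f] by (simp add: inv_BijGroup)
  show "f ((inv\<^bsub>BijGroup S\<^esub> f) x) = x"
    using assms bij_betw_inv_into_right[OF f] by (simp add: inv_BijGroup)
qed

lemma subgroup_BijGroup_Bij: "subgroup G (BijGroup S) \<Longrightarrow> g \<in> G \<Longrightarrow> g \<in> Bij S"
  using subgroup.subset by (fastforce simp: BijGroup_def)

definition set_stabilizer :: "('a \<Rightarrow> 'a) set \<Rightarrow> 'a set \<Rightarrow> ('a \<Rightarrow> 'a) set"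
  where "set_stabilizer G N = {g \<in> G. g ` N = N}"

lemma subgroup_set_stabilizer:
  assumes G: "subgroup G (BijGroup S)" and N: "N \<subseteq> S"
  shows "subgroup (set_stabilizer G N) (BijGroup S)"
proof -
  have image_id: "f ` N = N" if "\<And>x. x \<in> N \<Longrightarrow> f x = x" for f
    using image_cong[of N N f id] that by simp
  show ?thesis
  proof (rule group.subgroupI[OF group_BijGroup])
    show "set_stabilizer G N \<subseteq> carrier (BijGroup S)"
      using subgroup.subset[OF G] unfolding set_stabilizer_def by auto
    have "\<one>\<^bsub>BijGroup S\<^esub> ` N = N"
      using N by (intro image_id) (simp add: BijGroup_one_apply subset_iff)
    then show "set_stabilizer G N \<noteq> {}"
      using subgroup.one_closed[OF G] unfolding set_stabilizer_def by blast
  next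
    fix a assume "a \<in> set_stabilizer G N"
    then have a: "a \<in> G" "a ` N = N" unfolding set_stabilizer_def by auto
    have "(inv\<^bsub>BijGroup S\<^esub> a) ` (a ` N) = N"
      unfolding image_image using N
      by (intro image_id) (simp add: BijGroup_inv_apply(1)[OF subgroup_BijGroup_Bij[OF G a(1)]] subset_iff)
    then show "inv\<^bsub>BijGroup S\<^esub> a \<in> set_stabilizer G N"
      using a subgroup.m_inv_closed[OF G] unfolding set_stabilizer_def by auto
  next
    fix a b assume "a \<in> set_stabilizer G N" "b \<in> set_stabilizer G N"
    then have ab: "a \<in> G" "a ` N = N" "b \<in> G" "b ` N = N" unfolding set_stabilizer_def by auto
    have "(a \<otimes>\<^bsub>BijGroup S\<^esub> b) ` N = a ` (b ` N)"
      unfolding image_image using N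
      by (intro image_cong) (simp_all add: subset_iff
          BijGroup_mult_apply[OF subgroup_BijGroup_Bij[OF G ab(1)] subgroup_BijGroup_Bij[OF G ab(3)]])
    then show "a \<otimes>\<^bsub>BijGroup S\<^esub> b \<in> set_stabilizer G N"
      using ab subgroup.m_closed[OF G] unfolding set_stabilizer_def by auto
  qed
qed

section \<open>Elation generalized quadrangles\<close>

lemma collinearI: "l \<in> L \<Longrightarrow> x \<in> l \<Longrightarrow> w \<in> l \<Longrightarrow> collinear L x w"
  unfolding collinear_def by blast

locale elation_GQ =
  fixes P :: "'p set" and L :: "'p set set" and s t :: nat and p :: 'p and G :: "('p \<Rightarrow> 'p) set"
  assumes EGQ: "is_EGQ P L s t p G"
begin

definition opposite :: "'p set" where "opposite = {x \<in> P. \<not> collinear L p x}"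

lemma finite_P: "finite P"
  and line_subset: "l \<in> L \<Longrightarrow> l \<subseteq> P"
  and card_line: "l \<in> L \<Longrightarrow> card l = s + 1"
  and card_lines_through: "x \<in> P \<Longrightarrow> card {l \<in> L. x \<in> l} = t + 1"
  and card_lines_joining: "x \<in> P \<Longrightarrow> w \<in> P \<Longrightarrow> x \<noteq> w \<Longrightarrow> card {l \<in> L. x \<in> l \<and> w \<in> l} \<le> 1"
  and GQ_axiom: "x \<in> P \<Longrightarrow> l \<in> L \<Longrightarrow> x \<notin> l \<Longrightarrow> \<exists>!w. w \<in> l \<and> collinear L x w"
  and p_in_P: "p \<in> P"
  and subgroup_G: "subgroup G (BijGroup P)"
  and elation: "g \<in> G \<Longrightarrow> elation P L p g"
  and regular: "x \<in> opposite \<Longrightarrow> x' \<in> opposite \<Longrightarrow> \<exists>!g. g \<in> G \<and> g x = x'"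
  using EGQ unfolding is_EGQ_def is_GQ_def opposite_def by auto

lemma finite_L: "finite L"
  using finite_subset[of L "Pow P"] finite_P line_subset by blast

lemma line_eqI:
  assumes "l \<in> L" "l' \<in> L" "a \<noteq> b" "a \<in> l" "b \<in> l" "a \<in> l'" "b \<in> l'"
  shows "l = l'"
proof (rule ccontr)
  assume "l \<noteq> l'"
  have "{l, l'} \<subseteq> {l'' \<in> L. a \<in> l'' \<and> b \<in> l''}" using assms by auto
  then have "card {l, l'} \<le> card {l'' \<in> L. a \<in> l'' \<and> b \<in> l''}"
    using finite_L by (intro card_mono) auto
  moreover have "a \<in> P" "b \<in> P" using assms line_subset by auto
  ultimately show False using card_lines_joining[of a b] \<open>l \<noteq> l'\<close> assms(3) by simp
qed

lemma collinear_unique: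
  assumes "l \<in> L" "x \<in> P" "x \<notin> l" "a \<in> l" "b \<in> l" "collinear L x a" "collinear L x b"
  shows "a = b"
  using GQ_axiom[OF assms(2,1,3)] assms(4-7) by blast

lemma collinear_exists:
  assumes "x \<in> P" "l \<in> L" "x \<notin> l"
  obtains w where "w \<in> l" "collinear L x w"
  using GQ_axiom[OF assms] by blast

lemma G_Bij: "g \<in> G \<Longrightarrow> g \<in> Bij P"
  using subgroup_BijGroup_Bij[OF subgroup_G] .

lemma G_image_line: "g \<in> G \<Longrightarrow> l \<in> L \<Longrightarrow> g ` l \<in> L"
  using elation unfolding elation_def GQ_aut_def by blast

lemma G_fixes_line_through_p:
  assumes g: "g \<in> G" and l: "l \<in> L" "p \<in> l"
  shows "g ` l = l"
proof -
  have "g = (\<lambda>x\<in>P. x) \<or> (\<forall>l\<in>L. p \<in> l \<longrightarrow> g ` l = l)"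
    using elation[OF g] unfolding elation_def by blast
  then show ?thesis using l line_subset[OF l(1)] by (auto cong: image_cong)
qed

lemma G_opposite:
  assumes g: "g \<in> G" and x: "x \<in> opposite"
  shows "g x \<in> opposite"
proof -
  have x: "x \<in> P" "\<not> collinear L p x" using x unfolding opposite_def by auto
  have "\<not> collinear L p (g x)"
  proof
    assume "collinear L p (g x)"
    then obtain l where l: "l \<in> L" "p \<in> l" "g x \<in> l" unfolding collinear_def by blast
    have "x = (inv\<^bsub>BijGroup P\<^esub> g) (g x)"
      using BijGroup_inv_apply(1)[OF G_Bij[OF g] x(1)] by simp
    also have "\<dots> \<in> (inv\<^bsub>BijGroup P\<^esub> g) ` l" using l(3) by (rule imageI)
    also have "\<dots> = l"
      using G_fixes_line_through_p[OF subgroup.m_inv_closed[OF subgroup_G g] l(1,2)] .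
    finally show False using x(2) collinearI[OF l(1,2)] by blast
  qed
  moreover have "g x \<in> P" using funcset_mem[OF Bij_imp_funcset[OF G_Bij[OF g]] x(1)] .
  ultimately show ?thesis unfolding opposite_def by blast
qed

text \<open>The elations about \<open>p\<close> fix the lines through \<open>p\<close>, so an opposite point collinear
  with both \<open>w\<close> and \<open>g w\<close> forces \<open>g w = w\<close> by the GQ axiom.\<close>

lemma G_fixes_collinear_point:
  assumes g: "g \<in> G" and w: "collinear L p w" and u: "u \<in> opposite"
    and "collinear L u w" "collinear L u (g w)"
  shows "g w = w"
proof -
  obtain l where l: "l \<in> L" "p \<in> l" "w \<in> l" using w unfolding collinear_def by blast
  have "g w \<in> l" using G_fixes_line_through_p[OF g l(1,2)] l(3) by blast
  moreover have "u \<in> P" "u \<notin> l" using u collinearI[OF l(1,2)] unfolding opposite_def by auto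
  ultimately show ?thesis using collinear_unique[OF l(1)] l(3) assms(4,5) by blast
qed

lemma G_eq_if_apply_eq:
  assumes "x \<in> opposite" "g \<in> G" "g' \<in> G" "g x = g' x"
  shows "g = g'"
  using regular[OF assms(1) G_opposite[OF assms(2,1)]] assms(2-4) by metis

lemma G_eq_one_if_fixes:
  assumes "x \<in> opposite" "g \<in> G" "g x = x"
  shows "g = \<one>\<^bsub>BijGroup P\<^esub>"
proof (rule G_eq_if_apply_eq[OF assms(1,2) subgroup.one_closed[OF subgroup_G]])
  show "g x = \<one>\<^bsub>BijGroup P\<^esub> x"
    using assms(1,3) BijGroup_one_apply[of x P] unfolding opposite_def by simp
qed

lemma card_line_opposite:
  assumes l: "l \<in> L" "p \<notin> l"
  shows "card (l \<inter> opposite) = s"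
proof -
  obtain w where w: "w \<in> l" "collinear L p w" using collinear_exists[OF p_in_P l] .
  have "l \<inter> opposite = l - {w}"
    using w collinear_unique[OF l(1) p_in_P l(2) _ w(1) _ w(2)] line_subset[OF l(1)]
    unfolding opposite_def by blast
  moreover have "finite l" using finite_subset[OF line_subset[OF l(1)] finite_P] .
  ultimately show ?thesis using card_line[OF l(1)] w(1) by simp
qed

end

sublocale elation_GQ \<subseteq> BG: group "BijGroup P"
  by (rule group_BijGroup)

locale elation_GQ_flag = elation_GQ +
  fixes y M z
  assumes y: "y \<in> P" "\<not> collinear L p y"
    and M: "M \<in> L" "y \<in> M"
    and z: "z \<in> M" "collinear L p z"
begin

definition other_lines where "other_lines = {N \<in> L. y \<in> N \<and> N \<noteq> M}"

lemma y_opposite: "y \<in> opposite"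
  using y unfolding opposite_def by simp

lemma G_carrier: "g \<in> G \<Longrightarrow> g \<in> carrier (BijGroup P)"
  using subgroup.mem_carrier[OF subgroup_G] .

lemma finite_G: "finite G"
proof -
  have "inj_on (\<lambda>g. g y) G" using G_eq_if_apply_eq[OF y_opposite] by (intro inj_onI)
  moreover have "(\<lambda>g. g y) ` G \<subseteq> P"
    using y_opposite G_opposite unfolding opposite_def by auto
  ultimately show ?thesis using finite_P by (metis finite_imageD finite_subset)
qed

lemma p_notin_line: "N \<in> L \<Longrightarrow> y \<in> N \<Longrightarrow> p \<notin> N"
  using y(2) collinearI by metis

lemma set_stabilizer_line_iff:
  assumes N: "N \<in> L" "y \<in> N" and g: "g \<in> G"
  shows "g \<in> set_stabilizer G N \<longleftrightarrow> g y \<in> N"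
proof
  assume "g \<in> set_stabilizer G N"
  then show "g y \<in> N" using N(2) unfolding set_stabilizer_def by blast
next
  assume gy: "g y \<in> N"
  obtain w where w: "w \<in> N" "collinear L p w"
    using collinear_exists[OF p_in_P N(1) p_notin_line[OF N]] .
  have gy_opposite: "g y \<in> opposite" using G_opposite[OF g y_opposite] .
  have gN: "g ` N \<in> L" using G_image_line[OF g N(1)] .
  have "g w = w"
  proof (rule G_fixes_collinear_point[OF g w(2) gy_opposite])
    show "collinear L (g y) w" using collinearI[OF N(1) gy w(1)] .
    show "collinear L (g y) (g w)" using collinearI[OF gN] N(2) w(1) by blast
  qed
  moreover have "g y \<noteq> w" using gy_opposite w(2) unfolding opposite_def by auto
  ultimately have "g ` N = N"
    using line_eqI[OF gN N(1) \<open>g y \<noteq> w\<close>] N(2) w(1) gy by (metis imageI)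
  then show "g \<in> set_stabilizer G N" using g unfolding set_stabilizer_def by blast
qed

lemma card_set_stabilizer_line:
  assumes N: "N \<in> L" "y \<in> N"
  shows "card (set_stabilizer G N) = s"
proof -
  have "bij_betw (\<lambda>g. g y) (set_stabilizer G N) (N \<inter> opposite)"
  proof (rule bij_betw_imageI)
    show "inj_on (\<lambda>g. g y) (set_stabilizer G N)"
      using G_eq_if_apply_eq[OF y_opposite] unfolding set_stabilizer_def by (intro inj_onI) auto
    show "(\<lambda>g. g y) ` set_stabilizer G N = N \<inter> opposite"
    proof
      show "(\<lambda>g. g y) ` set_stabilizer G N \<subseteq> N \<inter> opposite"
        using set_stabilizer_line_iff[OF N] G_opposite[OF _ y_opposite]
        unfolding set_stabilizer_def by auto
      show "N \<inter> opposite \<subseteq> (\<lambda>g. g y) ` set_stabilizer G N"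
      proof
        fix w assume w: "w \<in> N \<inter> opposite"
        then obtain g where "g \<in> G" "g y = w" using regular[OF y_opposite] by blast
        then show "w \<in> (\<lambda>g. g y) ` set_stabilizer G N"
          using set_stabilizer_line_iff[OF N] w by (metis IntD1 image_eqI)
      qed
    qed
  qed
  then show ?thesis
    using bij_betw_same_card card_line_opposite[OF N(1) p_notin_line[OF N]] by metis
qed

lemma point_stabilizer_iff:
  assumes g: "g \<in> G"
  shows "g z = z \<longleftrightarrow> collinear L (g y) z"
proof
  assume "g z = z"
  then show "collinear L (g y) z"
    using collinearI[OF G_image_line[OF g M(1)]] M(2) z(1) by (metis imageI)
next
  assume "collinear L (g y) z"
  moreover have "collinear L (g y) (g z)"
    using collinearI[OF G_image_line[OF g M(1)]] M(2) z(1) by blast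
  ultimately show "g z = z"
    using G_fixes_collinear_point[OF g z(2) G_opposite[OF g y_opposite]] by blast
qed

lemma set_stabilizer_point: "set_stabilizer G {z} = {g \<in> G. g z = z}"
  unfolding set_stabilizer_def by auto

lemma set_stabilizer_M_subset: "set_stabilizer G M \<subseteq> set_stabilizer G {z}"
proof
  fix g assume g: "g \<in> set_stabilizer G M"
  then have "g \<in> G" "g y \<in> M" using M(2) unfolding set_stabilizer_def by auto
  then show "g \<in> set_stabilizer G {z}"
    using point_stabilizer_iff collinearI[OF M(1) _ z(1)] unfolding set_stabilizer_point by blast
qed

lemma point_stabilizer_Int_line:
  assumes N: "N \<in> other_lines"
  shows "set_stabilizer G {z} \<inter> set_stabilizer G N \<subseteq> {\<one>\<^bsub>BijGroup P\<^esub>}"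
proof
  fix g assume "g \<in> set_stabilizer G {z} \<inter> set_stabilizer G N"
  moreover have NL: "N \<in> L" "y \<in> N" "N \<noteq> M" using N unfolding other_lines_def by auto
  ultimately have g: "g \<in> G" "collinear L (g y) z" "g y \<in> N"
    using point_stabilizer_iff set_stabilizer_line_iff[OF NL(1,2)]
    unfolding set_stabilizer_point by auto
  have "g y = y"
  proof (rule ccontr)
    assume ne: "g y \<noteq> y"
    then have "g y \<notin> M" using line_eqI[OF M(1) NL(1) ne _ M(2) g(3) NL(2)] NL(3) by blast
    moreover have "g y \<in> P" using G_opposite[OF g(1) y_opposite] unfolding opposite_def by simp
    ultimately have "y = z"
      using collinear_unique[OF M(1) _ _ M(2) z(1) collinearI[OF NL(1) g(3) NL(2)] g(2)] by blast
    then show False using y(2) z(2) by simp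
  qed
  then show "g \<in> {\<one>\<^bsub>BijGroup P\<^esub>}" using G_eq_one_if_fixes[OF y_opposite g(1)] by simp
qed

lemma subgroup_line_stabilizer: "l \<in> L \<Longrightarrow> subgroup (set_stabilizer G l) (BijGroup P)"
  using subgroup_set_stabilizer[OF subgroup_G line_subset] .

lemma set_stabilizer_subset: "set_stabilizer G N \<subseteq> G"
  unfolding set_stabilizer_def by blast

lemma other_lines_D: "N \<in> other_lines \<Longrightarrow> N \<in> L \<and> y \<in> N \<and> N \<noteq> M"
  unfolding other_lines_def by blast

lemma card_other_lines: "card other_lines = t"
proof -
  have "other_lines = {l \<in> L. y \<in> l} - {M}" unfolding other_lines_def by auto
  then show ?thesis using card_lines_through[OF y(1)] M finite_L by simp
qed

lemma G_collinear: "g \<in> G \<Longrightarrow> collinear L u v \<Longrightarrow> collinear L (g u) (g v)"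
  unfolding collinear_def using G_image_line by blast

lemma obtain_M_stabilizer_collinear:
  assumes w: "w \<in> P" "\<not> collinear L w z"
  obtains a where "a \<in> set_stabilizer G M" "collinear L w (a y)"
proof -
  have "w \<notin> M" using w(2) collinearI[OF M(1) _ z(1)] by blast
  then obtain m where m: "m \<in> M" "collinear L w m" using collinear_exists[OF w(1) M(1)] by blast
  have "m \<noteq> z" using m(2) w(2) by blast
  then have "m \<in> opposite"
    using collinear_unique[OF M(1) p_in_P p_notin_line[OF M] m(1) z(1) _ z(2)] m(1)
      line_subset[OF M(1)] unfolding opposite_def by blast
  then obtain a where a: "a \<in> G" "a y = m" using regular[OF y_opposite] by blast
  then have "a \<in> set_stabilizer G M" using set_stabilizer_line_iff[OF M] m(1) by simp
  then show thesis using that a(2) m(2) by blast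
qed

lemma G_subset_covering:
  "G \<subseteq> set_stabilizer G {z} \<union>
    (\<Union>N\<in>other_lines. set_stabilizer G M <#>\<^bsub>BijGroup P\<^esub> set_stabilizer G N)"
proof
  fix g assume g: "g \<in> G"
  show "g \<in> set_stabilizer G {z} \<union>
    (\<Union>N\<in>other_lines. set_stabilizer G M <#>\<^bsub>BijGroup P\<^esub> set_stabilizer G N)"
  proof (cases "g z = z")
    case True
    then show ?thesis using g unfolding set_stabilizer_point by blast
  next
    case False
    have "g y \<in> P" "\<not> collinear L (g y) z"
      using G_opposite[OF g y_opposite] point_stabilizer_iff[OF g] False
      unfolding opposite_def by auto
    then obtain a where aM: "a \<in> set_stabilizer G M" and "collinear L (g y) (a y)"
      by (rule obtain_M_stabilizer_collinear)
    have a: "a \<in> G" using aM set_stabilizer_subset by blast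
    define b where "b = inv\<^bsub>BijGroup P\<^esub> a \<otimes>\<^bsub>BijGroup P\<^esub> g"
    have a': "inv\<^bsub>BijGroup P\<^esub> a \<in> G" using subgroup.m_inv_closed[OF subgroup_G a] .
    have b: "b \<in> G" unfolding b_def using subgroup.m_closed[OF subgroup_G a' g] .
    have g_eq: "g = a \<otimes>\<^bsub>BijGroup P\<^esub> b"
      unfolding b_def using G_carrier a g by (simp add: BG.m_assoc[symmetric])
    have "(inv\<^bsub>BijGroup P\<^esub> a) (a y) = y" "(inv\<^bsub>BijGroup P\<^esub> a) (g y) = b y"
      using BijGroup_inv_apply(1)[OF G_Bij[OF a] y(1)]
        BijGroup_mult_apply[OF G_Bij[OF a'] G_Bij[OF g] y(1)] unfolding b_def by simp_all
    then have "collinear L y (b y)"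
      using G_collinear[OF a' \<open>collinear L (g y) (a y)\<close>] collinear_def by metis
    then obtain N where N: "N \<in> L" "y \<in> N" "b y \<in> N" unfolding collinear_def by blast
    then have bN: "b \<in> set_stabilizer G N" using set_stabilizer_line_iff[OF N(1,2) b] by simp
    have "N \<noteq> M"
    proof
      assume "N = M"
      then have "g \<in> set_stabilizer G M"
        using g_eq subgroup.m_closed[OF subgroup_line_stabilizer[OF M(1)] aM] bN by simp
      then show False using set_stabilizer_M_subset False unfolding set_stabilizer_point by blast
    qed
    then have "N \<in> other_lines" using N unfolding other_lines_def by simp
    moreover have "g \<in> set_stabilizer G M <#>\<^bsub>BijGroup P\<^esub> set_stabilizer G N"
      using g_eq aM bN unfolding set_mult_def by blast
    ultimately show ?thesis by blast
  qed
qed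

lemma line_stabilizers_product:
  assumes N: "N \<in> other_lines" and N': "N' \<in> other_lines" "N \<noteq> N'"
    and c: "c \<in> set_stabilizer G M" and b: "b \<in> set_stabilizer G N"
    and cb: "c \<otimes>\<^bsub>BijGroup P\<^esub> b \<in> set_stabilizer G N'"
  shows "b = \<one>\<^bsub>BijGroup P\<^esub> \<or> c \<otimes>\<^bsub>BijGroup P\<^esub> b = \<one>\<^bsub>BijGroup P\<^esub>"
proof -
  have NL: "N \<in> L" "y \<in> N" "N \<noteq> M" and N'L: "N' \<in> L" "y \<in> N'" "N' \<noteq> M"
    using N N' other_lines_D by auto
  have cG: "c \<in> G" and bG: "b \<in> G" and cbG: "c \<otimes>\<^bsub>BijGroup P\<^esub> b \<in> G"
    using c b cb set_stabilizer_subset by auto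
  have cb_apply: "(c \<otimes>\<^bsub>BijGroup P\<^esub> b) y = c (b y)"
    using BijGroup_mult_apply[OF G_Bij[OF cG] G_Bij[OF bG] y(1)] .
  have cy_M: "c y \<in> M" and by_N: "b y \<in> N" and cby_N': "c (b y) \<in> N'"
    using set_stabilizer_line_iff[OF M cG] set_stabilizer_line_iff[OF NL(1,2) bG]
      set_stabilizer_line_iff[OF N'L(1,2) cbG] c b cb cb_apply by auto
  consider "c y = y" | "c y \<noteq> y" "c (b y) \<in> M" | "c y \<noteq> y" "c (b y) \<notin> M" by blast
  then show ?thesis
  proof cases
    case 1
    then have "c = \<one>\<^bsub>BijGroup P\<^esub>" using G_eq_one_if_fixes[OF y_opposite cG] by simp
    then have "b y \<in> N'"
      using cby_N' by_N line_subset[OF NL(1)] BijGroup_one_apply by (metis subsetD)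
    then have "b y = y" using line_eqI[OF NL(1) N'L(1) _ by_N NL(2) _ N'L(2)] N'(2) by blast
    then show ?thesis using G_eq_one_if_fixes[OF y_opposite bG] by simp
  next
    case 2
    then have "c (b y) = y" using line_eqI[OF M(1) N'L(1) _ 2(2) M(2) cby_N' N'L(2)] N'L(3) by blast
    then show ?thesis using G_eq_one_if_fixes[OF y_opposite cbG] cb_apply by simp
  next
    case 3
    have "collinear L (c (b y)) y" using collinearI[OF N'L(1) cby_N' N'L(2)] .
    moreover have "collinear L (c (b y)) (c y)"
      using collinearI[OF G_image_line[OF cG NL(1)]] by_N NL(2) by blast
    moreover have "c (b y) \<in> P" using cby_N' line_subset[OF N'L(1)] by blast
    ultimately have "y = c y" using collinear_unique[OF M(1) _ 3(2) M(2) cy_M] by blast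
    then show ?thesis using 3(1) by simp
  qed
qed

lemma set_mult_line_stabilizers_disjoint:
  assumes "N \<in> other_lines" "N' \<in> other_lines" "N \<noteq> N'"
  shows "(set_stabilizer G M <#>\<^bsub>BijGroup P\<^esub> set_stabilizer G N) \<inter>
    (set_stabilizer G M <#>\<^bsub>BijGroup P\<^esub> set_stabilizer G N') \<subseteq> set_stabilizer G M"
proof
  fix g assume "g \<in> (set_stabilizer G M <#>\<^bsub>BijGroup P\<^esub> set_stabilizer G N) \<inter>
    (set_stabilizer G M <#>\<^bsub>BijGroup P\<^esub> set_stabilizer G N')"
  then obtain a b a' b' where ab: "a \<in> set_stabilizer G M" "b \<in> set_stabilizer G N"
    "a' \<in> set_stabilizer G M" "b' \<in> set_stabilizer G N'"
    and g: "g = a \<otimes>\<^bsub>BijGroup P\<^esub> b" "g = a' \<otimes>\<^bsub>BijGroup P\<^esub> b'"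
    unfolding set_mult_def by blast
  have carrier: "a \<in> carrier (BijGroup P)" "b \<in> carrier (BijGroup P)"
    "a' \<in> carrier (BijGroup P)" "b' \<in> carrier (BijGroup P)"
    using ab set_stabilizer_subset G_carrier by blast+
  define c where "c = inv\<^bsub>BijGroup P\<^esub> a' \<otimes>\<^bsub>BijGroup P\<^esub> a"
  have "c \<in> set_stabilizer G M"
    unfolding c_def using ab subgroup_line_stabilizer[OF M(1)] subgroup.m_closed subgroup.m_inv_closed
    by metis
  moreover have "c \<otimes>\<^bsub>BijGroup P\<^esub> b = b'"
    using g carrier unfolding c_def by (simp add: BG.m_assoc BG.inv_solve_left')
  ultimately have "b = \<one>\<^bsub>BijGroup P\<^esub> \<or> b' = \<one>\<^bsub>BijGroup P\<^esub>"
    using line_stabilizers_product[OF assms] ab by metis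
  then show "g \<in> set_stabilizer G M" using g carrier ab by auto
qed

lemma product_partition_stabilizers:
  "product_partition (BijGroup P\<lparr>carrier := G\<rparr>) (set_stabilizer G {z}) (set_stabilizer G M)
    (set_stabilizer G) other_lines"
proof -
  have subgroup_restrict: "subgroup H (BijGroup P\<lparr>carrier := G\<rparr>)"
    if "subgroup H (BijGroup P)" "H \<subseteq> G" for H
    using BG.subgroup_incl[OF that(1) subgroup_G that(2)] .
  have z_subset: "{z} \<subseteq> P" using z(1) line_subset[OF M(1)] by blast
  show ?thesis
  proof (intro product_partition.intro product_partition_axioms.intro)
    show "group (BijGroup P\<lparr>carrier := G\<rparr>)"
      using subgroup.subgroup_is_group[OF subgroup_G group_BijGroup] .
    show "finite (carrier (BijGroup P\<lparr>carrier := G\<rparr>))" using finite_G by simp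
    show "subgroup (set_stabilizer G {z}) (BijGroup P\<lparr>carrier := G\<rparr>)"
      using subgroup_restrict subgroup_set_stabilizer[OF subgroup_G z_subset] set_stabilizer_subset .
    show "subgroup (set_stabilizer G M) (BijGroup P\<lparr>carrier := G\<rparr>)"
      using subgroup_restrict subgroup_line_stabilizer[OF M(1)] set_stabilizer_subset .
    show "subgroup (set_stabilizer G N) (BijGroup P\<lparr>carrier := G\<rparr>)" if "N \<in> other_lines" for N
      using subgroup_restrict subgroup_line_stabilizer set_stabilizer_subset that other_lines_D by blast
    show "card (set_stabilizer G N) = card (set_stabilizer G M)" if "N \<in> other_lines" for N
      using card_set_stabilizer_line M that other_lines_D by metis
    show "set_stabilizer G {z} \<inter> set_stabilizer G N \<subseteq> {\<one>\<^bsub>BijGroup P\<lparr>carrier := G\<rparr>\<^esub>}"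
      if "N \<in> other_lines" for N
      using point_stabilizer_Int_line[OF that] by simp
    show "carrier (BijGroup P\<lparr>carrier := G\<rparr>) \<subseteq> set_stabilizer G {z} \<union>
      (\<Union>N\<in>other_lines. set_stabilizer G M <#>\<^bsub>BijGroup P\<lparr>carrier := G\<rparr>\<^esub> set_stabilizer G N)"
      using G_subset_covering by simp
    show "(set_stabilizer G M <#>\<^bsub>BijGroup P\<lparr>carrier := G\<rparr>\<^esub> set_stabilizer G N) \<inter>
      (set_stabilizer G M <#>\<^bsub>BijGroup P\<lparr>carrier := G\<rparr>\<^esub> set_stabilizer G N') \<subseteq> set_stabilizer G M"
      if "N \<in> other_lines" "N' \<in> other_lines" "N \<noteq> N'" for N N'
      using set_mult_line_stabilizers_disjoint[OF that] by simp
  qed (use set_stabilizer_M_subset finite_L other_lines_def in auto)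
qed

end

theorem corollary2p5:
  fixes P :: "'p set" and L :: "'p set set" and s t :: nat
    and p :: 'p and G :: "('p \<Rightarrow> 'p) set"
  assumes egq: "is_EGQ P L s t p G"
    and ndvd: "\<not> s dvd t"
    and y: "y \<in> P" "\<not> collinear L p y"
    and M: "M \<in> L" "y \<in> M"
    and z: "z \<in> M" "collinear L p z"
  shows "{g \<in> G. g z = z} <#>\<^bsub>BijGroup P\<^esub> derived (BijGroup P) G
       = {g \<in> G. g ` M = M} <#>\<^bsub>BijGroup P\<^esub> derived (BijGroup P) G"
proof -
  interpret elation_GQ_flag P L s t p G y M z
    using egq y M z by unfold_locales
  have "\<not> card (set_stabilizer G M) dvd card other_lines"
    using ndvd card_set_stabilizer_line[OF M] card_other_lines by simp
  then have "set_stabilizer G {z} <#>\<^bsub>BijGroup P\<^esub> derived (BijGroup P\<lparr>carrier := G\<rparr>) G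
      = set_stabilizer G M <#>\<^bsub>BijGroup P\<^esub> derived (BijGroup P\<lparr>carrier := G\<rparr>) G"
    using product_partition.set_mult_derived_eq[OF product_partition_stabilizers] by simp
  then show ?thesis
    unfolding BG.derived_consistent[OF subset_refl subgroup_G] set_stabilizer_point
    unfolding set_stabilizer_def .
qed

end
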